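(* Let $\alpha>0$, $0\le m<s<M$, $f\in\mathcal{F}(m,M,s)$, and $x_0\in[0,\pi]$. Put $l=\pi(s-m)/(M-m)$ and $l^-=\pi-l$. Then $$\eta_\alpha(x_0)M-(M-m)\nu_\alpha(x_0,l^-)\le u_f(x_0)\le \eta_\alpha(x_0)m+(M-m)\nu_\alpha(x_0,l).$$ Equality holds in the right inequality if and only if $f=m+(M-m)\chi_{I(a_m,l)}$ a.e. on $[-\pi,\pi]$, where $a_m=x_0(1-lc_\alpha)$ if $x_0(1-lc_\alpha)<\pi-l$ and $a_m=\pi-l$ otherwise. Equality holds in the left inequality if and only if $f=M-(M-m)\chi_{I(a_m^-,l^-)}$ a.e. on $[-\pi,\pi]$, where $a_m^-=x_0(1-l^-c_\alpha)$ if $x_0(1-l^-c_\alpha)<\pi-l^-$ and $a_m^-=\pi-l^-$ otherwise.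
   Context: Robin problem: for $\alpha>0$ and $f\in L^1[-\pi,\pi]$, find $u\in C^1[-\pi,\pi]$ with $u'$ absolutely continuous on $[-\pi,\pi]$, $-u''=f$ a.e. on $(-\pi,\pi)$, and $-u'(-\pi)+\alpha u(-\pi)=u'(\pi)+\alpha u(\pi)=0$. It has a unique solution $u_f(x)=\int_{-\pi}^{\pi}G(x,y)f(y)\,dy$, where $G(x,y)=-\tfrac12 c_\alpha xy-\tfrac12|x-y|+\tfrac{1}{2c_\alpha}$ and $c_\alpha=\alpha/(1+\alpha\pi)$. For $0\le m<s<M$, $\mathcal{F}(m,M,s)$ is the set of $f\in L^1[-\pi,\pi]$ with $m\le f\le M$ and $\|f\|_{L^1}=2\pi s$. $I(a,l)=[a-l,a+l]$, $\chi_E$ is the characteristic function of $E$. $\eta_\alpha(x)=-\tfrac12x^2+\tfrac{\pi}{\alpha}+\tfrac{\pi^2}{2}$. For $x_0\in[0,\pi]$ and $l\in(0,\pi)$: $\nu_\alpha(x_0,l)=\dfrac{l}{c_\alpha}\Big(1-\dfrac{lc_\alpha}{2}\Big)\big(1-x_0^2c_\alpha^2\big)$ if $x_0<\dfrac{\pi-l}{1-lc_\alpha}$, and $\nu_\alpha(x_0,l)=-\tfrac12(\pi-x_0)^2+l(1-c_\alpha x_0)\big(2\pi-l+\tfrac1\alpha\big)$ otherwise. *)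

theory Defs
  imports "HOL-Analysis.Analysis"
begin

definition c_alpha :: "real \<Rightarrow> real" where
  "c_alpha \<alpha> = \<alpha> / (1 + \<alpha> * pi)"

(* Green's function of the Robin problem *)
definition green :: "real \<Rightarrow> real \<Rightarrow> real \<Rightarrow> real" where
  "green \<alpha> x y = - (1/2) * c_alpha \<alpha> * x * y - (1/2) * \<bar>x - y\<bar> + 1 / (2 * c_alpha \<alpha>)"

(* the solution u_f of the Robin problem, via the Green representation *)
definition u_sol :: "real \<Rightarrow> (real \<Rightarrow> real) \<Rightarrow> real \<Rightarrow> real" where
  "u_sol \<alpha> f x = (LINT y:{-pi..pi}|lborel. green \<alpha> x y * f y)"

definition F_class :: "real \<Rightarrow> real \<Rightarrow> real \<Rightarrow> (real \<Rightarrow> real) set" where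
  "F_class m M s = {f. set_integrable lborel {-pi..pi} f
      \<and> (AE x in lborel. x \<in> {-pi..pi} \<longrightarrow> m \<le> f x \<and> f x \<le> M)
      \<and> (LINT x:{-pi..pi}|lborel. \<bar>f x\<bar>) = 2 * pi * s}"

definition eta :: "real \<Rightarrow> real \<Rightarrow> real" where
  "eta \<alpha> x = - (1/2) * x^2 + pi / \<alpha> + pi^2 / 2"

definition nu :: "real \<Rightarrow> real \<Rightarrow> real \<Rightarrow> real" where
  "nu \<alpha> x0 l =
     (if x0 < (pi - l) / (1 - l * c_alpha \<alpha>)
      then l / c_alpha \<alpha> * (1 - l * c_alpha \<alpha> / 2) * (1 - x0^2 * (c_alpha \<alpha>)^2)
      else - (1/2) * (pi - x0)^2 + l * (1 - c_alpha \<alpha> * x0) * (2 * pi - l + 1 / \<alpha>))"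

definition I_int :: "real \<Rightarrow> real \<Rightarrow> real set" where
  "I_int a l = {a - l .. a + l}"

definition a_opt :: "real \<Rightarrow> real \<Rightarrow> real \<Rightarrow> real" where
  "a_opt \<alpha> x0 l = (if x0 * (1 - l * c_alpha \<alpha>) < pi - l then x0 * (1 - l * c_alpha \<alpha>) else pi - l)"

end

theory Submission
  imports Defs
begin

text \<open>Bathtub principle. For fixed \<open>x0\<close>, \<open>y \<mapsto> G(x0,y)\<close> is affine, increasing on
  \<open>[-pi,x0]\<close> and decreasing on \<open>[x0,pi]\<close>; hence its level sets are null and its superlevel sets
  in \<open>[-pi,pi]\<close> are intervals containing \<open>x0\<close>. Let \<open>h = m + (M - m)\<chi>\<^bsub>I\<^esub>\<close> where \<open>I = I(a\<^sub>m,l)\<close>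
  is the superlevel interval of length \<open>2l\<close>, so that \<open>h\<close> has the same mass as \<open>f\<close>, and let \<open>t\<close>
  be the value of \<open>G\<close> at the left end of \<open>I\<close>. Then \<open>(G - t)(h - f) \<ge> 0\<close>, and integrating gives
  \<open>u\<^sub>f(x0) \<le> u\<^sub>h(x0)\<close>, with equality iff \<open>f = h\<close> a.e. The lower bound is the upper bound
  applied to \<open>M + m - f\<close>.\<close>

lemma c_alpha_pos: "\<alpha> > 0 \<Longrightarrow> c_alpha \<alpha> > 0"
  by (simp add: c_alpha_def add_pos_pos)

lemma c_alpha_mult_pi_less_1: "\<alpha> > 0 \<Longrightarrow> c_alpha \<alpha> * pi < 1"
  by (simp add: c_alpha_def add_pos_pos field_simps)

lemma inverse_c_alpha: "\<alpha> > 0 \<Longrightarrow> 1 / c_alpha \<alpha> = 1 / \<alpha> + pi"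
  by (simp add: c_alpha_def add_pos_pos field_simps)

lemma c_alpha_mult_less_1:
  assumes "\<alpha> > 0" "y \<le> pi"
  shows "c_alpha \<alpha> * y < 1"
proof -
  have "c_alpha \<alpha> * y \<le> c_alpha \<alpha> * pi"
    using assms c_alpha_pos[of \<alpha>] by (intro mult_left_mono) auto
  then show ?thesis using c_alpha_mult_pi_less_1[OF assms(1)] by linarith
qed

lemma green_left: "y \<le> x \<Longrightarrow>
    green \<alpha> x y = 1 / (2 * c_alpha \<alpha>) - x / 2 + (1 - c_alpha \<alpha> * x) / 2 * y"
  by (simp add: green_def field_simps)

lemma green_right: "x \<le> y \<Longrightarrow>
    green \<alpha> x y = 1 / (2 * c_alpha \<alpha>) + x / 2 - (1 + c_alpha \<alpha> * x) / 2 * y"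
  by (simp add: green_def field_simps)

lemma continuous_on_green: "continuous_on S (green \<alpha> x)"
  unfolding green_def by (intro continuous_intros)

lemma set_integrable_green_interval: "set_integrable lborel {p..q} (green \<alpha> x)"
  by (rule borel_integrable_atLeastAtMost'[OF continuous_on_green])

lemma green_mono_left:
  assumes "\<alpha> > 0" "x \<le> pi" "y \<le> z" "z \<le> x"
  shows "green \<alpha> x y \<le> green \<alpha> x z"
  using c_alpha_mult_less_1[OF assms(1,2)] assms(3,4)
  by (simp add: green_left mult_left_mono)

lemma green_antimono_right:
  assumes "\<alpha> > 0" "0 \<le> x" "x \<le> y" "y \<le> z"
  shows "green \<alpha> x z \<le> green \<alpha> x y"
  using c_alpha_pos[OF assms(1)] assms(2-4)
  by (simp add: green_right mult_left_mono)

lemma finite_green_level_set: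
  assumes "\<alpha> > 0" "x \<in> {0..pi}"
  shows "finite {y. green \<alpha> x y = t}"
proof -
  define c where "c = c_alpha \<alpha>"
  define y\<^sub>1 where "y\<^sub>1 = (t - (1 / (2 * c) - x / 2)) / ((1 - c * x) / 2)"
  define y\<^sub>2 where "y\<^sub>2 = (1 / (2 * c) + x / 2 - t) / ((1 + c * x) / 2)"
  have "c * x < 1" "c * x \<ge> 0"
    using c_alpha_mult_less_1[OF assms(1), of x] c_alpha_pos[OF assms(1)] assms(2)
    by (auto simp: c_def)
  then have slopes: "(1 - c * x) / 2 > 0" "(1 + c * x) / 2 > 0" by auto
  have "{y. green \<alpha> x y = t} \<subseteq> {y\<^sub>1, y\<^sub>2}"
  proof
    fix y assume "y \<in> {y. green \<alpha> x y = t}"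
    then have t: "green \<alpha> x y = t" by simp
    show "y \<in> {y\<^sub>1, y\<^sub>2}"
    proof (cases "y \<le> x")
      case True
      then have "t = 1 / (2 * c) - x / 2 + (1 - c * x) / 2 * y"
        using t by (simp add: green_left c_def)
      then have "y = y\<^sub>1" using slopes by (simp add: y\<^sub>1_def field_simps)
      then show ?thesis by simp
    next
      case False
      then have "t = 1 / (2 * c) + x / 2 - (1 + c * x) / 2 * y"
        using t by (simp add: green_right c_def)
      then have "y = y\<^sub>2" using slopes by (simp add: y\<^sub>2_def field_simps)
      then show ?thesis by simp
    qed
  qed
  then show ?thesis by (rule finite_subset) simp
qed

lemma has_integral_affine:
  fixes A B a b :: real
  assumes "a \<le> b"
  shows "((\<lambda>y. A + B * y) has_integral (A * (b - a) + B * (b^2 - a^2) / 2)) {a..b}"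
proof -
  have "((\<lambda>y. A + B * y) has_integral
      ((\<lambda>y. A * y + B * y^2 / 2) b - (\<lambda>y. A * y + B * y^2 / 2) a)) {a..b}"
  proof (rule fundamental_theorem_of_calculus[OF assms])
    fix y
    have "((\<lambda>y. A * y + B * y^2 / 2) has_real_derivative A + B * y) (at y)"
      by (auto intro!: derivative_eq_intros)
    then show "((\<lambda>y. A * y + B * y^2 / 2) has_vector_derivative A + B * y) (at y within {a..b})"
      by (simp add: has_real_derivative_iff_has_vector_derivative has_vector_derivative_at_within)
  qed
  then show ?thesis by (simp add: algebra_simps diff_divide_distrib)
qed

lemma set_integral_green:
  assumes "p \<le> x" "x \<le> q"
  shows "(LINT y:{p..q}|lborel. green \<alpha> x y) =
      (1 / (2 * c_alpha \<alpha>) - x / 2) * (x - p) + (1 - c_alpha \<alpha> * x) / 2 * (x^2 - p^2) / 2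
    + (1 / (2 * c_alpha \<alpha>) + x / 2) * (q - x) - (1 + c_alpha \<alpha> * x) / 2 * (q^2 - x^2) / 2"
proof -
  have "(green \<alpha> x has_integral
      (1 / (2 * c_alpha \<alpha>) - x / 2) * (x - p) + (1 - c_alpha \<alpha> * x) / 2 * (x^2 - p^2) / 2
    + ((1 / (2 * c_alpha \<alpha>) + x / 2) * (q - x) + - ((1 + c_alpha \<alpha> * x) / 2) * (q^2 - x^2) / 2)) {p..q}"
  proof (rule has_integral_combine[OF assms])
    show "(green \<alpha> x has_integral (1 / (2 * c_alpha \<alpha>) - x / 2) * (x - p)
        + (1 - c_alpha \<alpha> * x) / 2 * (x^2 - p^2) / 2) {p..x}"
      by (rule has_integral_eq[OF _ has_integral_affine[OF assms(1)]]) (simp add: green_left)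
    show "(green \<alpha> x has_integral (1 / (2 * c_alpha \<alpha>) + x / 2) * (q - x)
        + - ((1 + c_alpha \<alpha> * x) / 2) * (q^2 - x^2) / 2) {x..q}"
      by (rule has_integral_eq[OF _ has_integral_affine[OF assms(2)]]) (simp add: green_right)
  qed
  then show ?thesis
    using set_borel_integral_eq_integral(2)[OF set_integrable_green_interval]
    by (simp add: integral_unique)
qed

lemma set_integral_green_eta:
  assumes "\<alpha> > 0" "x \<in> {-pi..pi}"
  shows "(LINT y:{-pi..pi}|lborel. green \<alpha> x y) = eta \<alpha> x"
proof -
  define c where "c = c_alpha \<alpha>"
  have c: "c \<noteq> 0" using c_alpha_pos[OF assms(1)] by (simp add: c_def)
  have "-pi \<le> x" "x \<le> pi" using assms(2) by auto
  then have "(LINT y:{-pi..pi}|lborel. green \<alpha> x y) =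
      (1 / (2 * c) - x / 2) * (x + pi) + (1 - c * x) / 2 * (x^2 - pi^2) / 2
    + (1 / (2 * c) + x / 2) * (pi - x) - (1 + c * x) / 2 * (pi^2 - x^2) / 2"
    by (simp add: set_integral_green c_def)
  also have "\<dots> = pi * (1 / c) - x^2 / 2 - pi^2 / 2"
    using c by (simp add: field_simps power2_eq_square)
  also have "\<dots> = eta \<alpha> x"
    by (simp add: c_def inverse_c_alpha[OF assms(1)] eta_def algebra_simps power2_eq_square)
  finally show ?thesis .
qed

lemma a_opt_interval_bounds:
  assumes "\<alpha> > 0" "x \<in> {0..pi}" "0 < L" "L < pi"
  defines "a \<equiv> a_opt \<alpha> x L"
  shows "-pi < a - L" "a + L \<le> pi" "a - L \<le> x" "x \<le> a + L"
proof -
  define c where "c = c_alpha \<alpha>"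
  have "c * x < 1" "L * c < 1"
    using c_alpha_mult_less_1[OF assms(1), of x] c_alpha_mult_less_1[OF assms(1), of L] assms(2,4)
    by (auto simp: c_def mult.commute)
  moreover have "0 \<le> L * c * x"
    using c_alpha_pos[OF assms(1)] assms(2,3) by (simp add: c_def)
  moreover have "L * c * x \<le> x"
    using \<open>L * c < 1\<close> assms(2) mult_right_mono[of "L * c" 1 x] by simp
  ultimately have "(-pi < a - L \<and> a + L \<le> pi) \<and> (a - L \<le> x \<and> x \<le> a + L)"
    using assms(2-4) unfolding a_def a_opt_def c_def[symmetric]
    by (cases "x * (1 - L * c) < pi - L") (simp_all add: algebra_simps)
  then show "-pi < a - L" "a + L \<le> pi" "a - L \<le> x" "x \<le> a + L" by auto
qed

text \<open>This identity is where \<open>a_opt\<close> comes from: it centres the interval so that the Green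
  function takes equal values at both endpoints, unless that interval would reach beyond \<open>pi\<close>,
  in which case the interval ends at \<open>pi\<close>.\<close>

lemma green_interval_endpoints_diff:
  assumes "a - L \<le> x" "x \<le> a + L"
  shows "green \<alpha> x (a + L) - green \<alpha> x (a - L) = x * (1 - L * c_alpha \<alpha>) - a"
  using assms by (simp add: green_left green_right field_simps)

lemma green_a_opt_endpoints:
  assumes "\<alpha> > 0" "x \<in> {0..pi}" "0 < L" "L < pi"
  defines "a \<equiv> a_opt \<alpha> x L"
  shows "green \<alpha> x (a - L) \<le> green \<alpha> x (a + L)"
    and "a + L < pi \<Longrightarrow> green \<alpha> x (a + L) = green \<alpha> x (a - L)"
  using green_interval_endpoints_diff[of a L x \<alpha>] a_opt_interval_bounds[OF assms(1-4)]
  unfolding a_def a_opt_def by (auto split: if_splits)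

lemma green_superlevel_interval:
  assumes "\<alpha> > 0" "x \<in> {0..pi}" "p \<le> x" "x \<le> q" "y \<le> pi"
    and "green \<alpha> x p \<le> green \<alpha> x q" and "q < pi \<Longrightarrow> green \<alpha> x q \<le> green \<alpha> x p"
  shows "y \<in> {p..q} \<Longrightarrow> green \<alpha> x p \<le> green \<alpha> x y"
    and "y \<notin> {p..q} \<Longrightarrow> green \<alpha> x y \<le> green \<alpha> x p"
proof -
  have mono: "green \<alpha> x u \<le> green \<alpha> x v" if "u \<le> v" "v \<le> x" for u v
    using green_mono_left[OF assms(1)] assms(2) that by auto
  have antimono: "green \<alpha> x v \<le> green \<alpha> x u" if "x \<le> u" "u \<le> v" for u v
    using green_antimono_right[OF assms(1)] assms(2) that by auto
  show "y \<in> {p..q} \<Longrightarrow> green \<alpha> x p \<le> green \<alpha> x y"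
    using mono[of p y] antimono[of y q] assms(6) by (cases "y \<le> x") auto
  show "y \<notin> {p..q} \<Longrightarrow> green \<alpha> x y \<le> green \<alpha> x p"
    using mono[of y p] antimono[of q y] assms(3-5,7) by force
qed

lemma set_integral_green_centered:
  assumes "a - L \<le> x" "x \<le> a + L"
  shows "(LINT y:{a-L..a+L}|lborel. green \<alpha> x y) =
    L / c_alpha \<alpha> - (L^2 + (a - x)^2) / 2 - c_alpha \<alpha> * x * a * L"
  using assms by (simp add: set_integral_green field_simps)
    (simp add: algebra_simps power2_eq_square, simp flip: add_divide_distrib)

lemma set_integral_green_a_opt:
  assumes "\<alpha> > 0" "x \<in> {0..pi}" "0 < L" "L < pi"
  defines "a \<equiv> a_opt \<alpha> x L"
  shows "(LINT y:{a-L..a+L}|lborel. green \<alpha> x y) = nu \<alpha> x L"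
proof -
  define c where "c = c_alpha \<alpha>"
  have "c > 0" using c_alpha_pos[OF assms(1)] by (simp add: c_def)
  have "L * c < 1"
    using c_alpha_mult_less_1[OF assms(1), of L] assms(4) by (simp add: c_def mult.commute)
  then have cond: "x < (pi - L) / (1 - L * c) \<longleftrightarrow> x * (1 - L * c) < pi - L"
    by (simp add: pos_less_divide_eq)
  have inv_alpha: "1 / \<alpha> = 1 / c - pi"
    using inverse_c_alpha[OF assms(1)] by (simp add: c_def)
  have "(LINT y:{a-L..a+L}|lborel. green \<alpha> x y) = L / c - (L^2 + (a - x)^2) / 2 - c * x * a * L"
    using set_integral_green_centered a_opt_interval_bounds[OF assms(1-4)]
    by (simp add: a_def c_def)
  also have "\<dots> = nu \<alpha> x L"
    using \<open>c > 0\<close> unfolding nu_def a_def a_opt_def c_def[symmetric] cond inv_alpha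
    by (simp add: field_simps) (simp add: algebra_simps power2_eq_square)
  finally show ?thesis .
qed

lemma set_integrable_continuous_mult:
  fixes g f :: "real \<Rightarrow> real"
  assumes "compact S" "continuous_on S g" "set_integrable lborel S f"
  shows "set_integrable lborel S (\<lambda>y. g y * f y)"
proof -
  obtain B where B: "\<And>y. y \<in> S \<Longrightarrow> \<bar>g y\<bar> \<le> B"
    using compact_imp_bounded[OF compact_continuous_image[OF assms(2,1)]]
    by (auto simp: bounded_iff)
  have "set_borel_measurable lborel S g"
    using borel_measurable_continuous_on_indicator[OF _ assms(2)] compact_imp_closed[OF assms(1)]
    by (simp add: set_borel_measurable_def)
  moreover have "set_borel_measurable lborel S f"
    using assms(3) by (simp add: set_borel_measurable_def set_integrable_def)
  moreover have "(\<lambda>y. indicator S y * (g y * f y)) = (\<lambda>y. (indicator S y * g y) * (indicator S y * f y))"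
    by (auto simp: indicator_def)
  ultimately have measurable: "set_borel_measurable lborel S (\<lambda>y. g y * f y)"
    by (simp add: set_borel_measurable_def)
  have bound: "AE y in lborel. y \<in> S \<longrightarrow> norm (g y * f y) \<le> norm (B * f y)"
  proof (intro AE_I2 impI)
    fix y assume "y \<in> S"
    then have "\<bar>g y\<bar> * \<bar>f y\<bar> \<le> \<bar>B\<bar> * \<bar>f y\<bar>"
      using B[of y] by (intro mult_right_mono) auto
    then show "norm (g y * f y) \<le> norm (B * f y)" by (simp add: abs_mult)
  qed
  have "set_integrable lborel S (\<lambda>y. B * f y)"
    using assms(3) by simp
  from set_integrable_bound[OF this measurable bound] show ?thesis .
qed

lemma bathtub_principle:
  fixes f h G :: "'a \<Rightarrow> real"
  assumes "set_integrable M S f" "set_integrable M S h"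
    and "set_integrable M S (\<lambda>y. G y * f y)" "set_integrable M S (\<lambda>y. G y * h y)"
    and same_mass: "(LINT y:S|M. f y) = (LINT y:S|M. h y)"
    and sign: "AE y in M. y \<in> S \<longrightarrow> 0 \<le> (G y - t) * (h y - f y)"
    and level_null: "{y. G y = t} \<in> null_sets M"
  shows "(LINT y:S|M. G y * f y) \<le> (LINT y:S|M. G y * h y)"
    and "(LINT y:S|M. G y * f y) = (LINT y:S|M. G y * h y) \<longleftrightarrow> (AE y in M. y \<in> S \<longrightarrow> f y = h y)"
proof -
  define D where "D y = (G y - t) * (h y - f y)" for y
  have D_expand: "D = (\<lambda>y. (G y * h y - G y * f y) - (t * h y - t * f y))"
    by (auto simp: D_def algebra_simps)
  have D_int: "set_integrable M S D"
    unfolding D_expand using assms(1-4) by auto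
  have D_integral: "(LINT y:S|M. D y) = (LINT y:S|M. G y * h y) - (LINT y:S|M. G y * f y)"
    unfolding D_expand using assms(1-4) same_mass by (simp add: set_integral_diff)
  have D_nonneg: "AE y in M. 0 \<le> indicator S y * D y"
    using sign by eventually_elim (simp add: D_def indicator_def)
  then have "0 \<le> (LINT y:S|M. D y)"
    by (simp add: set_lebesgue_integral_def integral_nonneg_AE)
  with D_integral show "(LINT y:S|M. G y * f y) \<le> (LINT y:S|M. G y * h y)"
    by linarith
  have "(LINT y:S|M. G y * f y) = (LINT y:S|M. G y * h y) \<longleftrightarrow> (LINT y:S|M. D y) = 0"
    using D_integral by linarith
  also have "\<dots> \<longleftrightarrow> (AE y in M. indicator S y * D y = 0)"
    using integral_nonneg_eq_0_iff_AE[OF _ D_nonneg] D_int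
    by (simp add: set_lebesgue_integral_def set_integrable_def)
  also have "\<dots> \<longleftrightarrow> (AE y in M. y \<in> S \<longrightarrow> f y = h y)"
  proof
    assume "AE y in M. indicator S y * D y = 0"
    moreover have "AE y in M. G y \<noteq> t"
      using AE_not_in[OF level_null] by simp
    ultimately show "AE y in M. y \<in> S \<longrightarrow> f y = h y"
      by eventually_elim (auto simp: D_def indicator_def)
  next
    assume "AE y in M. y \<in> S \<longrightarrow> f y = h y"
    then show "AE y in M. indicator S y * D y = 0"
      by eventually_elim (auto simp: D_def indicator_def)
  qed
  finally show "(LINT y:S|M. G y * f y) = (LINT y:S|M. G y * h y) \<longleftrightarrow> (AE y in M. y \<in> S \<longrightarrow> f y = h y)" .
qed

lemma set_integral_mult_step:
  fixes g :: "'a \<Rightarrow> real"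
  assumes "set_integrable M S g" "set_integrable M T g" "T \<subseteq> S"
  shows "set_integrable M S (\<lambda>y. g y * (A + B * indicator T y))"
    and "(LINT y:S|M. g y * (A + B * indicator T y)) = A * (LINT y:S|M. g y) + B * (LINT y:T|M. g y)"
proof -
  have split: "(\<lambda>y. indicator S y * (g y * (A + B * indicator T y))) =
      (\<lambda>y. A * (indicator S y * g y) + B * (indicator T y * g y))"
    using assms(3) by (force simp: fun_eq_iff indicator_def algebra_simps)
  show "set_integrable M S (\<lambda>y. g y * (A + B * indicator T y))"
    using assms(1,2) by (simp add: set_integrable_def split)
  show "(LINT y:S|M. g y * (A + B * indicator T y)) = A * (LINT y:S|M. g y) + B * (LINT y:T|M. g y)"
    using assms(1,2) by (simp add: set_integrable_def set_lebesgue_integral_def split)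
qed

lemma u_sol_upper_bound:
  fixes f :: "real \<Rightarrow> real"
  assumes "\<alpha> > 0" "x \<in> {0..pi}" "0 < L" "L < pi" "m \<le> M"
    and f_int: "set_integrable lborel {-pi..pi} f"
    and f_bounds: "AE y in lborel. y \<in> {-pi..pi} \<longrightarrow> m \<le> f y \<and> f y \<le> M"
    and f_mass: "(LINT y:{-pi..pi}|lborel. f y) = 2 * pi * m + 2 * L * (M - m)"
  defines "h \<equiv> \<lambda>y. m + (M - m) * indicator (I_int (a_opt \<alpha> x L) L) y"
  shows "u_sol \<alpha> f x \<le> eta \<alpha> x * m + (M - m) * nu \<alpha> x L"
    and "u_sol \<alpha> f x = eta \<alpha> x * m + (M - m) * nu \<alpha> x L \<longleftrightarrow>
      (AE y in lborel. y \<in> {-pi..pi} \<longrightarrow> f y = h y)"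
proof -
  define S where "S = {-pi..pi}"
  define G where "G = green \<alpha> x"
  define a where "a = a_opt \<alpha> x L"
  have interval: "I_int a L = {a-L..a+L}" "{a-L..a+L} \<subseteq> S"
    using a_opt_interval_bounds[OF assms(1-4)] by (auto simp: I_int_def S_def a_def)
  have G_int: "set_integrable lborel S G" "set_integrable lborel {a-L..a+L} G"
    by (simp_all add: S_def G_def set_integrable_green_interval)
  have one_int: "set_integrable lborel S (\<lambda>_. 1::real)" "set_integrable lborel {a-L..a+L} (\<lambda>_. 1::real)"
    by (simp_all add: S_def borel_integrable_atLeastAtMost')
  have h_int: "set_integrable lborel S h" and h_mass: "(LINT y:S|lborel. h y) = 2 * pi * m + 2 * L * (M - m)"
    using set_integral_mult_step[OF one_int interval(2), of m "M - m"] assms(3)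
    by (simp_all add: h_def a_def[symmetric] interval(1) S_def set_integral_const)
  have Gh_int: "set_integrable lborel S (\<lambda>y. G y * h y)"
    and u_h: "(LINT y:S|lborel. G y * h y) = eta \<alpha> x * m + (M - m) * nu \<alpha> x L"
    using set_integral_mult_step[OF G_int interval(2), of m "M - m"]
      set_integral_green_eta[OF assms(1)] set_integral_green_a_opt[OF assms(1-4)] assms(2)
    by (simp_all add: h_def a_def[symmetric] interval(1) S_def G_def)
  have Gf_int: "set_integrable lborel S (\<lambda>y. G y * f y)"
    using set_integrable_continuous_mult[OF _ continuous_on_green f_int] by (simp add: S_def G_def)
  have sign: "AE y in lborel. y \<in> S \<longrightarrow> 0 \<le> (G y - G (a - L)) * (h y - f y)"
    using f_bounds
  proof eventually_elim
    case (elim y)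
    show ?case
    proof
      assume "y \<in> S"
      then show "0 \<le> (G y - G (a - L)) * (h y - f y)"
        using green_superlevel_interval[OF assms(1,2), of "a - L" "a + L" y]
          green_a_opt_endpoints[OF assms(1-4)] a_opt_interval_bounds[OF assms(1-4)] elim
        by (cases "y \<in> {a-L..a+L}")
          (auto simp: S_def G_def a_def h_def I_int_def intro: mult_nonneg_nonneg mult_nonpos_nonpos)
    qed
  qed
  have level_null: "{y. G y = G (a - L)} \<in> null_sets lborel"
    using finite_green_level_set[OF assms(1,2)] by (simp add: G_def finite_imp_null_set_lborel)
  note bathtub = bathtub_principle[OF f_int[folded S_def] h_int Gf_int Gh_int _ sign level_null]
  show "u_sol \<alpha> f x \<le> eta \<alpha> x * m + (M - m) * nu \<alpha> x L"
    using bathtub(1) f_mass h_mass u_h by (simp add: u_sol_def S_def G_def)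
  show "u_sol \<alpha> f x = eta \<alpha> x * m + (M - m) * nu \<alpha> x L \<longleftrightarrow>
      (AE y in lborel. y \<in> {-pi..pi} \<longrightarrow> f y = h y)"
    using bathtub(2) f_mass h_mass u_h by (simp add: u_sol_def S_def G_def)
qed

lemma u_sol_lower_bound:
  fixes f :: "real \<Rightarrow> real"
  assumes "\<alpha> > 0" "x \<in> {0..pi}" "0 < L" "L < pi" "m \<le> M"
    and f_int: "set_integrable lborel {-pi..pi} f"
    and f_bounds: "AE y in lborel. y \<in> {-pi..pi} \<longrightarrow> m \<le> f y \<and> f y \<le> M"
    and f_mass: "(LINT y:{-pi..pi}|lborel. f y) = 2 * pi * M - 2 * L * (M - m)"
  defines "h \<equiv> \<lambda>y. M - (M - m) * indicator (I_int (a_opt \<alpha> x L) L) y"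
  shows "eta \<alpha> x * M - (M - m) * nu \<alpha> x L \<le> u_sol \<alpha> f x"
    and "u_sol \<alpha> f x = eta \<alpha> x * M - (M - m) * nu \<alpha> x L \<longleftrightarrow>
      (AE y in lborel. y \<in> {-pi..pi} \<longrightarrow> f y = h y)"
proof -
  define g where "g = (\<lambda>y. M + m - f y)"
  have const_int: "set_integrable lborel {-pi..pi} (\<lambda>_. c)" for c :: real
    by (simp add: borel_integrable_atLeastAtMost')
  have g_int: "set_integrable lborel {-pi..pi} g"
    using const_int f_int by (simp add: g_def)
  have g_bounds: "AE y in lborel. y \<in> {-pi..pi} \<longrightarrow> m \<le> g y \<and> g y \<le> M"
    using f_bounds by eventually_elim (auto simp: g_def)
  have g_mass: "(LINT y:{-pi..pi}|lborel. g y) = 2 * pi * m + 2 * L * (M - m)"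
    using const_int f_int f_mass by (simp add: g_def set_integral_const algebra_simps)
  have "u_sol \<alpha> g x = (M + m) * eta \<alpha> x - u_sol \<alpha> f x"
    using set_integrable_continuous_mult[OF _ continuous_on_green f_int]
      set_integrable_green_interval set_integral_green_eta[OF assms(1)] assms(2)
    by (simp add: u_sol_def g_def right_diff_distrib set_integral_diff)
  moreover have "(g y = m + (M - m) * indicator (I_int (a_opt \<alpha> x L) L) y) \<longleftrightarrow> f y = h y" for y
    by (auto simp: g_def h_def algebra_simps)
  ultimately show "eta \<alpha> x * M - (M - m) * nu \<alpha> x L \<le> u_sol \<alpha> f x"
    and "u_sol \<alpha> f x = eta \<alpha> x * M - (M - m) * nu \<alpha> x L \<longleftrightarrow>
      (AE y in lborel. y \<in> {-pi..pi} \<longrightarrow> f y = h y)"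
    using u_sol_upper_bound[OF assms(1-5) g_int g_bounds g_mass] by (auto simp: algebra_simps)
qed

lemma F_class_integral:
  assumes "0 \<le> m" "f \<in> F_class m M s"
  shows "(LINT y:{-pi..pi}|lborel. f y) = 2 * pi * s"
proof -
  have f_int: "set_integrable lborel {-pi..pi} f"
    and f_bounds: "AE y in lborel. y \<in> {-pi..pi} \<longrightarrow> m \<le> f y \<and> f y \<le> M"
    and abs_mass: "(LINT y:{-pi..pi}|lborel. \<bar>f y\<bar>) = 2 * pi * s"
    using assms(2) by (auto simp: F_class_def)
  from f_bounds have "AE y in lborel. indicator {-pi..pi} y * \<bar>f y\<bar> = indicator {-pi..pi} y * f y"
    by eventually_elim (use assms(1) in \<open>auto simp: indicator_def\<close>)
  then have "(LINT y:{-pi..pi}|lborel. \<bar>f y\<bar>) = (LINT y:{-pi..pi}|lborel. f y)"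
    using f_int set_integrable_abs[OF f_int]
    by (simp add: set_lebesgue_integral_def set_integrable_def integral_cong_AE)
  then show ?thesis using abs_mass by simp
qed

theorem theorem2:
  fixes \<alpha> m M s x0 :: real and f :: "real \<Rightarrow> real"
  assumes "\<alpha> > 0" and "0 \<le> m" and "m < s" and "s < M"
    and "f \<in> F_class m M s"
    and "x0 \<in> {0..pi}"
  defines "l \<equiv> pi * (s - m) / (M - m)"
  defines "lm \<equiv> pi - l"
  shows "eta \<alpha> x0 * M - (M - m) * nu \<alpha> x0 lm \<le> u_sol \<alpha> f x0
       \<and> u_sol \<alpha> f x0 \<le> eta \<alpha> x0 * m + (M - m) * nu \<alpha> x0 l
       \<and> (u_sol \<alpha> f x0 = eta \<alpha> x0 * m + (M - m) * nu \<alpha> x0 l \<longleftrightarrow>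
            (AE x in lborel. x \<in> {-pi..pi} \<longrightarrow>
               f x = m + (M - m) * indicator (I_int (a_opt \<alpha> x0 l) l) x))
       \<and> (u_sol \<alpha> f x0 = eta \<alpha> x0 * M - (M - m) * nu \<alpha> x0 lm \<longleftrightarrow>
            (AE x in lborel. x \<in> {-pi..pi} \<longrightarrow>
               f x = M - (M - m) * indicator (I_int (a_opt \<alpha> x0 lm) lm) x))"
proof -
  have "m \<le> M" using assms(3,4) by simp
  have f_int: "set_integrable lborel {-pi..pi} f"
    and f_bounds: "AE y in lborel. y \<in> {-pi..pi} \<longrightarrow> m \<le> f y \<and> f y \<le> M"
    using assms(5) by (auto simp: F_class_def)
  have "0 < l" "l < pi" "0 < lm" "lm < pi"
    using assms(3,4) by (auto simp: l_def lm_def field_simps)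
  have "(M - m) * l = pi * (s - m)"
    using assms(3,4) by (simp add: l_def)
  then have "(LINT y:{-pi..pi}|lborel. f y) = 2 * pi * m + 2 * l * (M - m)"
    and "(LINT y:{-pi..pi}|lborel. f y) = 2 * pi * M - 2 * lm * (M - m)"
    using F_class_integral[OF assms(2,5)] by (simp_all add: lm_def algebra_simps)
  note upper = u_sol_upper_bound[OF assms(1,6) \<open>0 < l\<close> \<open>l < pi\<close> \<open>m \<le> M\<close> f_int f_bounds this(1)]
    and lower = u_sol_lower_bound[OF assms(1,6) \<open>0 < lm\<close> \<open>lm < pi\<close> \<open>m \<le> M\<close> f_int f_bounds this(2)]
  show ?thesis using upper lower by blast
qed

end
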